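(* Consider the two additive-noise structural causal models $$\mathcal{M}:\ X_1=U_1,\ X_2=X_1+U_2,\ Y=X_1X_2+U_Y, \qquad (U_1,U_2,U_Y)\sim\mathcal{N}(0,\Sigma),\ \Sigma=\begin{bmatrix}1&1&1\\1&1&1\\1&1&1\end{bmatrix},$$ $$\mathcal{M}':\ X_1=U_1,\ X_2=2X_1+U_2,\ Y=X_1X_2+U_Y, \qquad (U_1,U_2,U_Y)\sim\mathcal{N}(0,\Sigma'),\ \Sigma'=\begin{bmatrix}1&0&1\\0&0&0\\1&0&1\end{bmatrix}.$$ Then $\mathcal{M}$ and $\mathcal{M}'$ induce the same observational distribution of $(X_1,X_2,Y)$, the same joint interventional distributions under $\mathrm{do}(X_1=x_1,X_2=x_2)$, and the same interventional distributions under $\mathrm{do}(X_2=x_2)$, but they disagree on the causal effect of intervening on $X_1$ (e.g. on $\mathbb{E}[Y\mid\mathrm{do}(X_1=x_1)]$ for $x_1\neq 0$). Consequently, in additive noise models with zero-mean Gaussian noise and an unrestricted causal graph (in particular, with a causal edge between treatments), single-variable interventional effects are not in general identifiable from observational and joint interventional data.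
   Context: An additive noise model is a structural causal model in which each endogenous variable equals a function of its parents plus an exogenous noise term; here the noise vector is zero-mean multivariate Gaussian with arbitrary (possibly singular) covariance. An intervention $\mathrm{do}(X=x)$ replaces the structural equation of $X$ by the constant $x$. *)

theory Defs
  imports "HOL-Probability.Probability"
begin

text \<open>A (possibly degenerate) zero-mean multivariate Gaussian random vector in R^3 with
  covariance matrix S: every linear functional c . U is N(0, c' S c), where
  N(0,0) is the point mass at 0.\<close>
definition centered_gaussian_vector ::
  "'a measure \<Rightarrow> ('a \<Rightarrow> real^3) \<Rightarrow> real^3^3 \<Rightarrow> bool" where
  "centered_gaussian_vector M U S \<longleftrightarrow>
     U \<in> borel_measurable M \<and>
     (\<forall>c::real^3. distr M borel (\<lambda>\<omega>. c \<bullet> U \<omega>) =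
        (if c \<bullet> (S *v c) = 0 then return borel 0
         else density lborel (normal_density 0 (sqrt (c \<bullet> (S *v c))))))"

text \<open>The optional arguments i1, i2 encode interventions do(X1 = a) (i1 = Some a) and
  do(X2 = b) (i2 = Some b); None means no intervention.
  Output and noise vectors are indexed 1 = X1/U1, 2 = X2/U2, 3 = Y/UY.\<close>
definition anm3 ::
  "(real \<Rightarrow> real) \<Rightarrow> (real \<Rightarrow> real \<Rightarrow> real) \<Rightarrow> real option \<Rightarrow> real option
     \<Rightarrow> real^3 \<Rightarrow> real^3" where
  "anm3 f2 fY i1 i2 u =
     (let x1 = (case i1 of None \<Rightarrow> u $ 1 | Some a \<Rightarrow> a);
          x2 = (case i2 of None \<Rightarrow> f2 x1 + u $ 2 | Some b \<Rightarrow> b)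
      in vector [x1, x2, fY x1 x2 + u $ 3])"

definition anm3_distr ::
  "'a measure \<Rightarrow> ('a \<Rightarrow> real^3) \<Rightarrow> (real \<Rightarrow> real) \<Rightarrow> (real \<Rightarrow> real \<Rightarrow> real)
     \<Rightarrow> real option \<Rightarrow> real option \<Rightarrow> (real^3) measure" where
  "anm3_distr M U f2 fY i1 i2 = distr M borel (\<lambda>\<omega>. anm3 f2 fY i1 i2 (U \<omega>))"

definition Sigma1 :: "real^3^3" where
  "Sigma1 = vector [vector [1,1,1], vector [1,1,1], vector [1,1,1]]"

definition Sigma2 :: "real^3^3" where
  "Sigma2 = vector [vector [1,0,1], vector [0,0,0], vector [1,0,1]]"

end

theory Submission
  imports Defs
begin

text \<open>Both noise covariances are singular. Under Sigma1 the differences U1 - U2 and U1 - UY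
  have variance 0, so U = (Z, Z, Z) almost surely; under Sigma2 the noise is (Z, 0, Z). In both
  cases Z = U1 is standard normal, so every interventional distribution is the image of N(0,1)
  under the structural map evaluated at these noise vectors. These maps agree for the
  observational regime, for do(X1, X2) and for do(X2), but under do(X1 = a) the response is
  Y = a^2 + (a + 1) Z in the first model and Y = 2 a^2 + Z in the second, with different means.\<close>

lemma inner_vector_3: "(vector [a, b, c] :: real^3) \<bullet> x = a * x $ 1 + b * x $ 2 + c * x $ 3"
  by (simp add: inner_vec_def sum_3)

lemma Sigma1_quadratic_form: "c \<bullet> (Sigma1 *v c) = (c $ 1 + c $ 2 + c $ 3)\<^sup>2"
  by (simp add: Sigma1_def inner_vec_def sum_3 matrix_vector_mult_def power2_eq_square algebra_simps)

lemma Sigma2_quadratic_form: "c \<bullet> (Sigma2 *v c) = (c $ 1 + c $ 3)\<^sup>2"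
  by (simp add: Sigma2_def inner_vec_def sum_3 matrix_vector_mult_def power2_eq_square algebra_simps)

lemma centered_gaussian_vector_measurable:
  "centered_gaussian_vector M U S \<Longrightarrow> U \<in> borel_measurable M"
  by (simp add: centered_gaussian_vector_def)

lemma centered_gaussian_vector_AE_degenerate:
  assumes "centered_gaussian_vector M U S" "c \<bullet> (S *v c) = 0"
  shows "AE \<omega> in M. c \<bullet> U \<omega> = 0"
proof -
  have "distr M borel (\<lambda>\<omega>. c \<bullet> U \<omega>) = return borel 0"
    using assms unfolding centered_gaussian_vector_def by auto
  then have "AE x in distr M borel (\<lambda>\<omega>. c \<bullet> U \<omega>). x = 0"
    by (simp only:) (simp add: AE_return)
  moreover have "(\<lambda>\<omega>. c \<bullet> U \<omega>) \<in> borel_measurable M"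
    using centered_gaussian_vector_measurable[OF assms(1)] by measurable
  ultimately show ?thesis
    by (rule AE_distrD[rotated])
qed

lemma centered_gaussian_vector_component_std_normal:
  assumes "centered_gaussian_vector M U S" "S $ i $ i = 1"
  shows "distr M borel (\<lambda>\<omega>. U \<omega> $ i) = std_normal_distribution"
proof -
  have "axis i 1 \<bullet> (S *v axis i 1) = 1"
    using assms(2) by (simp add: inner_axis' matrix_vector_mult_basis column_def)
  then have "distr M borel (\<lambda>\<omega>. axis i 1 \<bullet> U \<omega>) = std_normal_distribution"
    using assms(1) unfolding centered_gaussian_vector_def by simp
  then show ?thesis
    by (simp add: inner_axis')
qed

lemma centered_gaussian_vector_component_measurable:
  "centered_gaussian_vector M U S \<Longrightarrow> (\<lambda>\<omega>. U \<omega> $ i) \<in> borel_measurable M"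
  using centered_gaussian_vector_measurable borel_measurable_nth by (rule measurable_compose)

lemma Sigma1_noise_AE:
  assumes "centered_gaussian_vector M U Sigma1"
  shows "AE \<omega> in M. U \<omega> $ 2 = U \<omega> $ 1 \<and> U \<omega> $ 3 = U \<omega> $ 1"
proof -
  have "AE \<omega> in M. U \<omega> $ 1 - U \<omega> $ 2 = 0" "AE \<omega> in M. U \<omega> $ 1 - U \<omega> $ 3 = 0"
    using centered_gaussian_vector_AE_degenerate[OF assms, of "vector [1, -1, 0]"]
      centered_gaussian_vector_AE_degenerate[OF assms, of "vector [1, 0, -1]"]
    by (simp_all add: Sigma1_quadratic_form inner_vector_3)
  then show ?thesis
    by eventually_elim simp
qed

lemma Sigma2_noise_AE:
  assumes "centered_gaussian_vector M U Sigma2"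
  shows "AE \<omega> in M. U \<omega> $ 2 = 0 \<and> U \<omega> $ 3 = U \<omega> $ 1"
proof -
  have "AE \<omega> in M. U \<omega> $ 2 = 0" "AE \<omega> in M. U \<omega> $ 1 - U \<omega> $ 3 = 0"
    using centered_gaussian_vector_AE_degenerate[OF assms, of "vector [0, 1, 0]"]
      centered_gaussian_vector_AE_degenerate[OF assms, of "vector [1, 0, -1]"]
    by (simp_all add: Sigma2_quadratic_form inner_vector_3)
  then show ?thesis
    by eventually_elim simp
qed

lemma distr_AE_factor:
  assumes "AE \<omega> in M. X \<omega> = g (Z \<omega>)" "distr M borel Z = G"
    and [measurable]: "X \<in> borel_measurable M" "Z \<in> borel_measurable M"
      "g \<in> borel_measurable borel" "F \<in> borel_measurable borel"
  shows "distr M borel (\<lambda>\<omega>. F (X \<omega>)) = distr G borel (\<lambda>z. F (g z))"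
proof -
  have "distr M borel (\<lambda>\<omega>. F (X \<omega>)) = distr M borel (\<lambda>\<omega>. F (g (Z \<omega>)))"
    using assms(1) by (intro distr_cong_AE) (auto elim!: AE_mp)
  also have "\<dots> = distr G borel (\<lambda>z. F (g z))"
    unfolding assms(2)[symmetric] by (subst distr_distr) (auto simp: comp_def)
  finally show ?thesis .
qed

lemma continuous_on_vector_3:
  fixes f g h :: "'a::topological_space \<Rightarrow> real"
  assumes "continuous_on S f" "continuous_on S g" "continuous_on S h"
  shows "continuous_on S (\<lambda>x. vector [f x, g x, h x] :: real^3)"
proof -
  have vector_3_eq: "(\<lambda>x. vector [f x, g x, h x] :: real^3) =
      (\<lambda>x. \<chi> i. if i = 1 then f x else if i = 2 then g x else h x)"
    by (simp add: fun_eq_iff vec_eq_iff forall_3)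
  show ?thesis
    unfolding vector_3_eq
  proof (intro continuous_on_vec_lambda)
    show "continuous_on S (\<lambda>x. if i = 1 then f x else if i = 2 then g x else h x)" for i :: 3
      by (cases "i = 1"; cases "i = 2") (simp_all add: assms)
  qed
qed

lemma continuous_on_anm3:
  assumes "continuous_on UNIV f2" "continuous_on UNIV (\<lambda>(a, b). fY a b)"
  shows "continuous_on UNIV (anm3 f2 fY i1 i2)"
proof -
  have fY: "continuous_on UNIV (\<lambda>u. fY (p u) (q u))"
    if "continuous_on UNIV p" "continuous_on UNIV q" for p q :: "real^3 \<Rightarrow> real"
    using continuous_on_compose2[OF assms(2) continuous_on_Pair[OF that]] by simp
  have f2: "continuous_on UNIV (\<lambda>u. f2 (p u))" if "continuous_on UNIV p" for p :: "real^3 \<Rightarrow> real"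
    using continuous_on_compose2[OF assms(1) that] by simp
  show ?thesis
    unfolding anm3_def Let_def
    by (cases i1; cases i2; simp; intro continuous_on_vector_3 fY f2 continuous_intros)
qed

lemma anm3_distr_std_normal_factor:
  assumes "AE \<omega> in M. U \<omega> = g (U \<omega> $ 1)"
    and "distr M borel (\<lambda>\<omega>. U \<omega> $ 1) = std_normal_distribution"
    and "U \<in> borel_measurable M" "continuous_on UNIV g"
    and "continuous_on UNIV f2" "continuous_on UNIV (\<lambda>(a, b). fY a b)"
  shows "anm3_distr M U f2 fY i1 i2 =
      distr std_normal_distribution borel (\<lambda>z. anm3 f2 fY i1 i2 (g z))"
  unfolding anm3_distr_def
proof (rule distr_AE_factor[OF assms(1,2,3)])
  show "(\<lambda>\<omega>. U \<omega> $ 1) \<in> borel_measurable M"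
    using assms(3) borel_measurable_nth by (rule measurable_compose)
  show "g \<in> borel_measurable borel" "anm3 f2 fY i1 i2 \<in> borel_measurable borel"
    using assms(4-6) by (auto intro: borel_measurable_continuous_onI continuous_on_anm3)
qed

lemma anm3_distr_Sigma1:
  assumes "centered_gaussian_vector M U Sigma1"
    and "continuous_on UNIV f2" "continuous_on UNIV (\<lambda>(a, b). fY a b)"
  shows "anm3_distr M U f2 fY i1 i2 =
      distr std_normal_distribution borel (\<lambda>z. anm3 f2 fY i1 i2 (\<chi> i. z))"
proof (rule anm3_distr_std_normal_factor[OF _ _ _ _ assms(2,3)])
  show "AE \<omega> in M. U \<omega> = (\<chi> i. U \<omega> $ 1)"
    using Sigma1_noise_AE[OF assms(1)] by eventually_elim (simp add: vec_eq_iff forall_3)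
  show "distr M borel (\<lambda>\<omega>. U \<omega> $ 1) = std_normal_distribution"
    using assms(1) by (rule centered_gaussian_vector_component_std_normal) (simp add: Sigma1_def)
  show "U \<in> borel_measurable M"
    using assms(1) by (rule centered_gaussian_vector_measurable)
  show "continuous_on UNIV (\<lambda>z::real. \<chi> i::3. z)"
    by (intro continuous_on_vec_lambda continuous_intros)
qed

lemma anm3_distr_Sigma2:
  assumes "centered_gaussian_vector M U Sigma2"
    and "continuous_on UNIV f2" "continuous_on UNIV (\<lambda>(a, b). fY a b)"
  shows "anm3_distr M U f2 fY i1 i2 =
      distr std_normal_distribution borel (\<lambda>z. anm3 f2 fY i1 i2 (\<chi> i. if i = 2 then 0 else z))"
proof (rule anm3_distr_std_normal_factor[OF _ _ _ _ assms(2,3)])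
  show "AE \<omega> in M. U \<omega> = (\<chi> i. if i = 2 then 0 else U \<omega> $ 1)"
    using Sigma2_noise_AE[OF assms(1)] by eventually_elim (simp add: vec_eq_iff forall_3)
  show "distr M borel (\<lambda>\<omega>. U \<omega> $ 1) = std_normal_distribution"
    using assms(1) by (rule centered_gaussian_vector_component_std_normal) (simp add: Sigma2_def)
  show "U \<in> borel_measurable M"
    using assms(1) by (rule centered_gaussian_vector_measurable)
  show "continuous_on UNIV (\<lambda>z::real. \<chi> i::3. if i = 2 then 0 else z)"
  proof (intro continuous_on_vec_lambda)
    show "continuous_on UNIV (\<lambda>z::real. if i = 2 then 0 else z)" for i :: 3
      by (cases "i = 2") simp_all
  qed
qed

lemma integral_std_normal_distribution_affine:
  "(\<integral>z. c + d * z \<partial>std_normal_distribution) = (c::real)"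
proof -
  interpret real_distribution std_normal_distribution
    by (rule real_dist_normal_dist)
  have "integrable std_normal_distribution (\<lambda>z. z)"
    using integrable_std_normal_distribution_moment[of 1] by simp
  moreover have "(\<integral>z. z \<partial>std_normal_distribution) = 0"
    using integral_std_normal_distribution_moment_odd[of 1] by simp
  ultimately show ?thesis
    using prob_space by simp
qed

lemma integral_AE_affine_std_normal:
  assumes "AE \<omega> in M. Y \<omega> = c + d * Z \<omega>" "distr M borel Z = std_normal_distribution"
    and "Y \<in> borel_measurable M" "Z \<in> borel_measurable M"
  shows "(\<integral>\<omega>. Y \<omega> \<partial>M) = c"
proof -
  have "(\<integral>\<omega>. Y \<omega> \<partial>M) = (\<integral>\<omega>. c + d * Z \<omega> \<partial>M)"
    using assms(1,3,4) by (intro integral_cong_AE) auto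
  also have "\<dots> = (\<integral>z. c + d * z \<partial>distr M borel Z)"
    using assms(4) by (intro integral_distr[symmetric]) auto
  also have "\<dots> = c"
    unfolding assms(2) by (rule integral_std_normal_distribution_affine)
  finally show ?thesis .
qed

lemma Sigma1_do_X1_mean:
  assumes "centered_gaussian_vector M U Sigma1"
  shows "(\<integral>\<omega>. anm3 (\<lambda>x1. x1) (\<lambda>x1 x2. x1 * x2) (Some a) None (U \<omega>) $ 3 \<partial>M) = a\<^sup>2"
proof (rule integral_AE_affine_std_normal[where d = "a + 1"])
  show "AE \<omega> in M. anm3 (\<lambda>x1. x1) (\<lambda>x1 x2. x1 * x2) (Some a) None (U \<omega>) $ 3 = a\<^sup>2 + (a + 1) * U \<omega> $ 1"
    using Sigma1_noise_AE[OF assms] by eventually_elim (simp add: anm3_def Let_def power2_eq_square distrib_left distrib_right)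
  show "distr M borel (\<lambda>\<omega>. U \<omega> $ 1) = std_normal_distribution"
    using assms by (rule centered_gaussian_vector_component_std_normal) (simp add: Sigma1_def)
  have [measurable]: "(\<lambda>\<omega>. U \<omega> $ i) \<in> borel_measurable M" for i
    using assms by (rule centered_gaussian_vector_component_measurable)
  then show "(\<lambda>\<omega>. anm3 (\<lambda>x1. x1) (\<lambda>x1 x2. x1 * x2) (Some a) None (U \<omega>) $ 3) \<in> borel_measurable M"
    "(\<lambda>\<omega>. U \<omega> $ 1) \<in> borel_measurable M"
    by (simp_all add: anm3_def Let_def)
qed

lemma Sigma2_do_X1_mean:
  assumes "centered_gaussian_vector M U Sigma2"
  shows "(\<integral>\<omega>. anm3 (\<lambda>x1. 2 * x1) (\<lambda>x1 x2. x1 * x2) (Some a) None (U \<omega>) $ 3 \<partial>M) = 2 * a\<^sup>2"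
proof (rule integral_AE_affine_std_normal[where d = 1])
  show "AE \<omega> in M. anm3 (\<lambda>x1. 2 * x1) (\<lambda>x1 x2. x1 * x2) (Some a) None (U \<omega>) $ 3 = 2 * a\<^sup>2 + 1 * U \<omega> $ 1"
    using Sigma2_noise_AE[OF assms] by eventually_elim (simp add: anm3_def Let_def power2_eq_square)
  show "distr M borel (\<lambda>\<omega>. U \<omega> $ 1) = std_normal_distribution"
    using assms by (rule centered_gaussian_vector_component_std_normal) (simp add: Sigma2_def)
  have [measurable]: "(\<lambda>\<omega>. U \<omega> $ i) \<in> borel_measurable M" for i
    using assms by (rule centered_gaussian_vector_component_measurable)
  then show "(\<lambda>\<omega>. anm3 (\<lambda>x1. 2 * x1) (\<lambda>x1 x2. x1 * x2) (Some a) None (U \<omega>) $ 3) \<in> borel_measurable M"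
    "(\<lambda>\<omega>. U \<omega> $ 1) \<in> borel_measurable M"
    by (simp_all add: anm3_def Let_def)
qed

lemma integral_anm3_eq_integral_anm3_distr:
  assumes "U \<in> borel_measurable M" "continuous_on UNIV f2" "continuous_on UNIV (\<lambda>(a, b). fY a b)"
  shows "(\<integral>\<omega>. anm3 f2 fY i1 i2 (U \<omega>) $ 3 \<partial>M) = (\<integral>x. x $ 3 \<partial>anm3_distr M U f2 fY i1 i2)"
  unfolding anm3_distr_def
  using assms borel_measurable_continuous_onI[OF continuous_on_anm3[OF assms(2,3)]]
  by (intro integral_distr[symmetric]) (auto intro: measurable_compose)

lemma continuous_on_times_case_prod: "continuous_on UNIV (\<lambda>(x1, x2). x1 * x2 :: real)"
  by (auto intro!: continuous_intros simp: case_prod_beta')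

lemma anm3_distr_Sigma1_eq_Sigma2:
  assumes "centered_gaussian_vector M U Sigma1" "centered_gaussian_vector N V Sigma2"
    and "i1 = None \<or> i2 \<noteq> None"
  shows "anm3_distr M U (\<lambda>x1. x1) (\<lambda>x1 x2. x1 * x2) i1 i2
      = anm3_distr N V (\<lambda>x1. 2 * x1) (\<lambda>x1 x2. x1 * x2) i1 i2"
proof -
  have "anm3 (\<lambda>x1. x1) (\<lambda>x1 x2. x1 * x2) i1 i2 (\<chi> i. z)
      = anm3 (\<lambda>x1. 2 * x1) (\<lambda>x1 x2. x1 * x2) i1 i2 (\<chi> i. if i = 2 then 0 else z)" for z
    using assms(3) by (cases i1; cases i2) (simp_all add: anm3_def)
  then show ?thesis
    using continuous_on_times_case_prod
    by (simp add: anm3_distr_Sigma1[OF assms(1)] anm3_distr_Sigma2[OF assms(2)] continuous_intros)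
qed

lemma anm3_distr_Sigma1_neq_Sigma2_do_X1:
  assumes "centered_gaussian_vector M U Sigma1" "centered_gaussian_vector N V Sigma2" "a \<noteq> 0"
  shows "anm3_distr M U (\<lambda>x1. x1) (\<lambda>x1 x2. x1 * x2) (Some a) None
      \<noteq> anm3_distr N V (\<lambda>x1. 2 * x1) (\<lambda>x1 x2. x1 * x2) (Some a) None"
proof
  have f2: "continuous_on UNIV (\<lambda>x1::real. x1)" "continuous_on UNIV (\<lambda>x1::real. 2 * x1)"
    by (intro continuous_intros)+
  assume same_distr: "anm3_distr M U (\<lambda>x1. x1) (\<lambda>x1 x2. x1 * x2) (Some a) None
      = anm3_distr N V (\<lambda>x1. 2 * x1) (\<lambda>x1 x2. x1 * x2) (Some a) None"
  have "a\<^sup>2 = (\<integral>y. y $ 3 \<partial>anm3_distr M U (\<lambda>x1. x1) (\<lambda>x1 x2. x1 * x2) (Some a) None)"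
    using Sigma1_do_X1_mean[OF assms(1)] integral_anm3_eq_integral_anm3_distr[OF
        centered_gaussian_vector_measurable[OF assms(1)] f2(1) continuous_on_times_case_prod]
    by simp
  also have "\<dots> = (\<integral>y. y $ 3 \<partial>anm3_distr N V (\<lambda>x1. 2 * x1) (\<lambda>x1 x2. x1 * x2) (Some a) None)"
    by (simp only: same_distr)
  also have "\<dots> = 2 * a\<^sup>2"
    using Sigma2_do_X1_mean[OF assms(2)] integral_anm3_eq_integral_anm3_distr[OF
        centered_gaussian_vector_measurable[OF assms(2)] f2(2) continuous_on_times_case_prod]
    by simp
  finally show False
    using assms(3) by simp
qed

theorem mainTheorem4:
  fixes M :: "'a measure" and U :: "'a \<Rightarrow> real^3"
    and N :: "'b measure" and V :: "'b \<Rightarrow> real^3"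
  assumes "prob_space M" and "centered_gaussian_vector M U Sigma1"
    and "prob_space N" and "centered_gaussian_vector N V Sigma2"
  shows "anm3_distr M U (\<lambda>x1. x1) (\<lambda>x1 x2. x1 * x2) None None
           = anm3_distr N V (\<lambda>x1. 2 * x1) (\<lambda>x1 x2. x1 * x2) None None \<and>
         (\<forall>x1 x2. anm3_distr M U (\<lambda>x1. x1) (\<lambda>x1 x2. x1 * x2) (Some x1) (Some x2)
           = anm3_distr N V (\<lambda>x1. 2 * x1) (\<lambda>x1 x2. x1 * x2) (Some x1) (Some x2)) \<and>
         (\<forall>x2. anm3_distr M U (\<lambda>x1. x1) (\<lambda>x1 x2. x1 * x2) None (Some x2)
           = anm3_distr N V (\<lambda>x1. 2 * x1) (\<lambda>x1 x2. x1 * x2) None (Some x2)) \<and>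
         (\<forall>x1. x1 \<noteq> 0 \<longrightarrow>
           anm3_distr M U (\<lambda>x1. x1) (\<lambda>x1 x2. x1 * x2) (Some x1) None
           \<noteq> anm3_distr N V (\<lambda>x1. 2 * x1) (\<lambda>x1 x2. x1 * x2) (Some x1) None) \<and>
         (\<forall>x1. x1 \<noteq> 0 \<longrightarrow>
           (\<integral>\<omega>. anm3 (\<lambda>x1. x1) (\<lambda>x1 x2. x1 * x2) (Some x1) None (U \<omega>) $ 3 \<partial>M)
           \<noteq> (\<integral>\<omega>. anm3 (\<lambda>x1. 2 * x1) (\<lambda>x1 x2. x1 * x2) (Some x1) None (V \<omega>) $ 3 \<partial>N))"
  using anm3_distr_Sigma1_eq_Sigma2[OF assms(2,4)]
    anm3_distr_Sigma1_neq_Sigma2_do_X1[OF assms(2,4)]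
    Sigma1_do_X1_mean[OF assms(2)] Sigma2_do_X1_mean[OF assms(4)]
  by simp


end
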